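(* Suppose Assumption A1 and Assumption A2(i) hold, let $K$ be $(\kappa,\gamma)$-strongly stable, $H=\lceil2\gamma^{-1}\log T\rceil$, and let $\{M_t\}$ be any sequence with $M_t\in\mathcal M$ for all $t$. Then for any $C>0$ and $T\ge3$, with probability at least $1-\frac{46\sigma_w\kappa_B^2\kappa^8}{C\gamma^2(1-\gamma)}$, $$\sum_{t=0}^{T-1}\big|F_t(M_{t-1-H:t})-c_t(x_t^K(M_{0:t-1}),u_t^K(M_{0:t}))\big|\le2G_cC^2(\log T)^2.$$
   Context: Linear system $x_{t+1}=Ax_t+Bu_t+w_t$, $x_0=0$; $\kappa_B:=\max\{\|B\|,1\}$; $w_s:=0$ for $s<0$. Cost functions $c_t$ fixed. $(\kappa,\gamma)$-strong stability: complex $P,Q$ with $A-BK=QPQ^{-1}$, $\|P\|\le1-\gamma$, $\|K\|,\|Q\|,\|Q^{-1}\|\le\kappa$ ($\kappa\ge1,\gamma\in(0,1)$). $A_K:=A-BK$. Assumption A1: $c_t$ convex, differentiable, $\|\nabla_xc_t(x,u)\|\le G_c\|x\|$, $\|\nabla_uc_t(x,u)\|\le G_c\|u\|$, $G_c\ge1$. Assumption A2(i): $\mathbb E\|w_t\|\le\sigma_w$. $\mathcal M:=\{M=\{M^{[0]},\dots,M^{[H-1]}\}:\|M^{[i]}\|\le2\kappa_B\kappa^3(1-\gamma)^i\}$. Disturbance-action policy at time $s$ with parameter $M_s$: $u_s=-Kx_s+\sum_{i=1}^HM_s^{[i-1]}w_{s-i}$; $x_t^K(M_{0:t-1})$ and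 $u_t^K(M_{0:t})$ are the state and input produced by applying these policies at times $0,1,\dots$ from $x_0=0$. Surrogate: $\Psi^{K,h}_{t,i}(M_{t-h:t}):=A_K^i\mathbf 1_{i\le h}+\sum_{j=0}^hA_K^jBM_{t-j}^{[i-j-1]}\mathbf 1_{i-j\in[1,H]}$; $y_t(M_{t-1-H:t-1}):=\sum_{i=0}^{2H}\Psi^{K,H}_{t-1,i}(M_{t-1-H:t-1})w_{t-1-i}$; $v_t(M_{t-1-H:t}):=-Ky_t+\sum_{i=1}^HM_t^{[i-1]}w_{t-i}$; $F_t(M_{t-1-H:t}):=c_t(y_t,v_t)$. *)

theory Defs
  imports "HOL-Analysis.Analysis" "HOL-Probability.Probability"
begin

definition mnorm :: "'a::real_normed_field ^'n::finite^'m::finite \<Rightarrow> real" where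
  "mnorm X = onorm (\<lambda>v. X *v v)"

fun mpow :: "real^'n::finite^'n \<Rightarrow> nat \<Rightarrow> real^'n^'n" where
  "mpow X 0 = mat 1"
| "mpow X (Suc k) = X ** mpow X k"

definition kappaB :: "real^'m::finite^'n::finite \<Rightarrow> real" where
  "kappaB B = max (mnorm B) 1"

definition cmat :: "real^'n::finite^'m::finite \<Rightarrow> complex^'n^'m" where
  "cmat X = (\<chi> i j. complex_of_real (X $ i $ j))"

definition strongly_stable ::
  "real^'n::finite^'n \<Rightarrow> real^'m::finite^'n \<Rightarrow> real^'n^'m \<Rightarrow> real \<Rightarrow> real \<Rightarrow> bool" where
  "strongly_stable A B K \<kappa> \<gamma> \<longleftrightarrow> \<kappa> \<ge> 1 \<and> 0 < \<gamma> \<and> \<gamma> < 1 \<and>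
     (\<exists>P Q Qi :: complex^'n^'n. Q ** Qi = mat 1 \<and> Qi ** Q = mat 1 \<and>
        cmat (A - B ** K) = Q ** P ** Qi \<and>
        mnorm P \<le> 1 - \<gamma> \<and> mnorm K \<le> \<kappa> \<and> mnorm Q \<le> \<kappa> \<and> mnorm Qi \<le> \<kappa>)"

text \<open>The set \<M>: M i stands for M^[i], i < H.\<close>
definition Mset :: "real^'m::finite^'n::finite \<Rightarrow> real \<Rightarrow> real \<Rightarrow> nat \<Rightarrow> (nat \<Rightarrow> real^'n^'m) set" where
  "Mset B \<kappa> \<gamma> H = {M. \<forall>i<H. mnorm (M i) \<le> 2 * kappaB B * \<kappa>^3 * (1 - \<gamma>)^i}"

definition wz :: "(nat \<Rightarrow> 'v::zero) \<Rightarrow> int \<Rightarrow> 'v" where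
  "wz w s = (if s < 0 then 0 else w (nat s))"

definition dac :: "real^'n::finite^'m::finite \<Rightarrow> nat \<Rightarrow> (int \<Rightarrow> nat \<Rightarrow> real^'n^'m)
    \<Rightarrow> (nat \<Rightarrow> real^'n) \<Rightarrow> int \<Rightarrow> real^'n \<Rightarrow> real^'m" where
  "dac K H M w s x = - (K *v x) + (\<Sum>i=1..H. M s (i - 1) *v wz w (s - int i))"

fun xK :: "real^'n::finite^'n \<Rightarrow> real^'m::finite^'n \<Rightarrow> real^'n^'m \<Rightarrow> nat
    \<Rightarrow> (int \<Rightarrow> nat \<Rightarrow> real^'n^'m) \<Rightarrow> (nat \<Rightarrow> real^'n) \<Rightarrow> nat \<Rightarrow> real^'n" where
  "xK A B K H M w 0 = 0"
| "xK A B K H M w (Suc s) =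
     A *v xK A B K H M w s + B *v dac K H M w (int s) (xK A B K H M w s) + w s"

definition uK :: "real^'n::finite^'n \<Rightarrow> real^'m::finite^'n \<Rightarrow> real^'n^'m \<Rightarrow> nat
    \<Rightarrow> (int \<Rightarrow> nat \<Rightarrow> real^'n^'m) \<Rightarrow> (nat \<Rightarrow> real^'n) \<Rightarrow> nat \<Rightarrow> real^'m" where
  "uK A B K H M w t = dac K H M w (int t) (xK A B K H M w t)"

definition Psi :: "real^'n::finite^'n \<Rightarrow> real^'m::finite^'n \<Rightarrow> real^'n^'m \<Rightarrow> nat
    \<Rightarrow> (int \<Rightarrow> nat \<Rightarrow> real^'n^'m) \<Rightarrow> nat \<Rightarrow> int \<Rightarrow> nat \<Rightarrow> real^'n^'n" where
  "Psi A B K H M h t i =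
     (if i \<le> h then mpow (A - B ** K) i else 0) +
     (\<Sum>j=0..h. if 1 \<le> int i - int j \<and> int i - int j \<le> int H
                then mpow (A - B ** K) j ** B ** M (t - int j) (i - j - 1) else 0)"

definition ysur :: "real^'n::finite^'n \<Rightarrow> real^'m::finite^'n \<Rightarrow> real^'n^'m \<Rightarrow> nat
    \<Rightarrow> (int \<Rightarrow> nat \<Rightarrow> real^'n^'m) \<Rightarrow> (nat \<Rightarrow> real^'n) \<Rightarrow> int \<Rightarrow> real^'n" where
  "ysur A B K H M w t =
     (\<Sum>i=0..2*H. Psi A B K H M H (t - 1) i *v wz w (t - 1 - int i))"

definition vsur :: "real^'n::finite^'n \<Rightarrow> real^'m::finite^'n \<Rightarrow> real^'n^'m \<Rightarrow> nat
    \<Rightarrow> (int \<Rightarrow> nat \<Rightarrow> real^'n^'m) \<Rightarrow> (nat \<Rightarrow> real^'n) \<Rightarrow> int \<Rightarrow> real^'m" where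
  "vsur A B K H M w t = dac K H M w t (ysur A B K H M w t)"

definition Fsur :: "(nat \<Rightarrow> real^'n::finite \<Rightarrow> real^'m::finite \<Rightarrow> real) \<Rightarrow> real^'n^'n
    \<Rightarrow> real^'m^'n \<Rightarrow> real^'n^'m \<Rightarrow> nat
    \<Rightarrow> (int \<Rightarrow> nat \<Rightarrow> real^'n^'m) \<Rightarrow> (nat \<Rightarrow> real^'n) \<Rightarrow> nat \<Rightarrow> real" where
  "Fsur c A B K H M w t = c t (ysur A B K H M w (int t)) (vsur A B K H M w (int t))"

definition A1 :: "(nat \<Rightarrow> real^'n::finite \<Rightarrow> real^'m::finite \<Rightarrow> real) \<Rightarrow> real \<Rightarrow> bool" where
  "A1 c G \<longleftrightarrow> G \<ge> 1 \<and> (\<forall>t.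
     convex_on UNIV (\<lambda>p. c t (fst p) (snd p)) \<and>
     (\<forall>x u. \<exists>gx gu. GDERIV (\<lambda>p. c t (fst p) (snd p)) (x, u) :> (gx, gu) \<and>
                    norm gx \<le> G * norm x \<and> norm gu \<le> G * norm u))"

end

theory Submission
  imports Defs
begin

text \<open>
  Write \<open>e s = w s + B \<Sigma>\<^sub>i\<^sub>\<le>\<^sub>H M s (i-1) w (s-i)\<close> for the disturbance driving the closed
  loop \<open>A\<^sub>K = A - BK\<close>. Then \<open>x t = \<Sigma>\<^sub>j\<^sub><\<^sub>t A\<^sub>K\<^sup>j e (t-1-j)\<close>, while the surrogate state \<open>y t\<close>
  keeps only the terms with \<open>j \<le> H\<close>. Strong stability gives \<open>\<parallel>A\<^sub>K\<^sup>j\<parallel> \<le> \<kappa>\<^sup>2 (1-\<gamma>)\<^sup>j\<close>, so all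
  states and inputs are bounded by a multiple of \<open>W = \<Sigma>\<^sub>s\<^sub><\<^sub>T \<parallel>w s\<parallel>\<close>, and the tail
  \<open>x t - y t\<close> is of order \<open>(1-\<gamma>)\<^sup>H W \<le> W / T\<^sup>2\<close>. As \<open>\<parallel>\<nabla>c\<^sub>t z\<parallel> \<le> G\<^sub>c \<parallel>z\<parallel>\<close>, the cost is
  \<open>O(W)\<close>-Lipschitz on a ball containing both state-input pairs, so the total gap is
  \<open>O(W\<^sup>2 log T / T\<^sup>2)\<close>. It is below \<open>2 G\<^sub>c C\<^sup>2 log\<^sup>2 T\<close> unless \<open>W\<close> exceeds a threshold
  proportional to \<open>C T\<close>, and Markov's inequality with \<open>E W \<le> T \<sigma>\<^sub>w\<close> bounds the probability
  of that event.
\<close>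

section \<open>Operator norm and strong stability\<close>

lemma bounded_linear_matrix_vector_mult:
  "bounded_linear (\<lambda>v. (X::'a::{real_normed_field,euclidean_space}^'n::finite^'m::finite) *v v)"
  by (simp add: linear_conv_bounded_linear[symmetric])

lemma norm_matrix_vector_mult_le:
  "norm ((X::'a::{real_normed_field,euclidean_space}^'n::finite^'m::finite) *v v) \<le> mnorm X * norm v"
  unfolding mnorm_def by (rule onorm[OF bounded_linear_matrix_vector_mult])

lemma mnorm_nonneg: "0 \<le> mnorm (X::'a::{real_normed_field,euclidean_space}^'n::finite^'m::finite)"
  unfolding mnorm_def by (rule onorm_pos_le[OF bounded_linear_matrix_vector_mult])

lemma mnorm_matrix_mul_le:
  "mnorm ((X::'a::{real_normed_field,euclidean_space}^'n::finite^'m::finite) ** (Y::'a^'k::finite^'n)) \<le> mnorm X * mnorm Y"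
proof -
  have "(\<lambda>v. (X ** Y) *v v) = (\<lambda>v. X *v v) \<circ> (\<lambda>v. Y *v v)"
    by (auto simp: matrix_vector_mul_assoc)
  thus ?thesis
    unfolding mnorm_def using onorm_compose[OF bounded_linear_matrix_vector_mult bounded_linear_matrix_vector_mult]
    by simp
qed

lemma mnorm_mat_one_le: "mnorm (mat 1 :: 'a::{real_normed_field,euclidean_space}^'n::finite^'n) \<le> 1"
proof -
  have "(*v) (mat 1 :: 'a^'n^'n) = (\<lambda>v. v)" by (rule ext) simp
  thus ?thesis unfolding mnorm_def by (simp add: onorm_id_le)
qed

definition cvec :: "real^'n::finite \<Rightarrow> complex^'n" where
  "cvec v = (\<chi> i. complex_of_real (v $ i))"

lemma norm_cvec: "norm (cvec v) = norm v"
  unfolding cvec_def norm_vec_def by simp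

lemma cmat_mult_cvec: "cmat X *v cvec v = cvec (X *v v)"
  unfolding cmat_def cvec_def matrix_vector_mult_def by (simp add: vec_eq_iff)

lemma cmat_matrix_mul: "cmat ((X::real^'n::finite^'m::finite) ** (Y::real^'k::finite^'n)) = cmat X ** cmat Y"
  unfolding cmat_def matrix_matrix_mult_def by (simp add: vec_eq_iff)

lemma cmat_mat_one: "cmat (mat 1 :: real^'n::finite^'n) = mat 1"
  unfolding cmat_def mat_def by (simp add: vec_eq_iff)

lemma mnorm_le_mnorm_cmat: "mnorm (X::real^'n::finite^'m::finite) \<le> mnorm (cmat X)"
  unfolding mnorm_def
proof (rule onorm_bound)
  show "0 \<le> onorm ((*v) (cmat X))" by (rule onorm_pos_le[OF bounded_linear_matrix_vector_mult])
  fix v :: "real^'n"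
  have "norm (X *v v) = norm (cmat X *v cvec v)" by (simp add: cmat_mult_cvec norm_cvec)
  also have "\<dots> \<le> onorm ((*v) (cmat X)) * norm (cvec v)"
    by (rule onorm[OF bounded_linear_matrix_vector_mult])
  finally show "norm (X *v v) \<le> onorm ((*v) (cmat X)) * norm v" by (simp add: norm_cvec)
qed

lemma mnorm_mpow_le_similar:
  fixes X :: "real^'n::finite^'n" and P Q Qi :: "complex^'n^'n"
  assumes inv: "Q ** Qi = mat 1" "Qi ** Q = mat 1" and sim: "cmat X = Q ** P ** Qi"
  shows "mnorm (mpow X k) \<le> mnorm Q * mnorm P ^ k * mnorm Qi"
proof -
  have "\<exists>Pk. cmat (mpow X k) = Q ** Pk ** Qi \<and> mnorm Pk \<le> mnorm P ^ k"
  proof (induction k)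
    case 0
    have "cmat (mpow X 0) = Q ** mat 1 ** Qi" using inv by (simp add: cmat_mat_one matrix_mul_rid)
    thus ?case using mnorm_mat_one_le by (intro exI[of _ "mat 1"]) simp
  next
    case (Suc k)
    then obtain Pk where Pk: "cmat (mpow X k) = Q ** Pk ** Qi" "mnorm Pk \<le> mnorm P ^ k" by blast
    have "cmat (mpow X (Suc k)) = Q ** P ** (Qi ** Q) ** Pk ** Qi"
      by (simp add: cmat_matrix_mul sim Pk(1) matrix_mul_assoc)
    also have "\<dots> = Q ** (P ** Pk) ** Qi" by (simp add: inv matrix_mul_rid matrix_mul_assoc)
    finally have "cmat (mpow X (Suc k)) = Q ** (P ** Pk) ** Qi" .
    moreover have "mnorm (P ** Pk) \<le> mnorm P ^ Suc k"
      using mnorm_matrix_mul_le[of P Pk] mult_left_mono[OF Pk(2) mnorm_nonneg[of P]] by simp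
    ultimately show ?case by blast
  qed
  then obtain Pk where Pk: "cmat (mpow X k) = Q ** Pk ** Qi" "mnorm Pk \<le> mnorm P ^ k" by blast
  have "mnorm (mpow X k) \<le> mnorm (Q ** Pk ** Qi)" using mnorm_le_mnorm_cmat Pk(1) by metis
  also have "\<dots> \<le> mnorm Q * mnorm Pk * mnorm Qi"
    by (meson mnorm_matrix_mul_le mnorm_nonneg mult_right_mono order_trans)
  also have "\<dots> \<le> mnorm Q * mnorm P ^ k * mnorm Qi"
    by (intro mult_right_mono mult_left_mono Pk(2) mnorm_nonneg)
  finally show ?thesis .
qed

lemma strongly_stable_mnorm_mpow_le:
  fixes A :: "real^'n::finite^'n" and B :: "real^'m::finite^'n" and K :: "real^'n^'m"
  assumes "strongly_stable A B K \<kappa> \<gamma>"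
  shows "mnorm (mpow (A - B ** K) k) \<le> \<kappa>^2 * (1 - \<gamma>)^k"
proof -
  obtain P Q Qi :: "complex^'n^'n" where h: "Q ** Qi = mat 1" "Qi ** Q = mat 1"
    "cmat (A - B ** K) = Q ** P ** Qi" "mnorm P \<le> 1 - \<gamma>" "mnorm Q \<le> \<kappa>" "mnorm Qi \<le> \<kappa>"
    using assms unfolding strongly_stable_def by blast
  have "1 \<le> \<kappa>" "\<gamma> < 1" using assms unfolding strongly_stable_def by auto
  have "mnorm (mpow (A - B ** K) k) \<le> mnorm Q * mnorm P ^ k * mnorm Qi"
    by (rule mnorm_mpow_le_similar[OF h(1-3)])
  also have "\<dots> \<le> \<kappa> * (1 - \<gamma>)^k * \<kappa>"
    using \<open>1 \<le> \<kappa>\<close> \<open>\<gamma> < 1\<close>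
    by (intro mult_mono power_mono h(4-6) mnorm_nonneg mult_nonneg_nonneg zero_le_power) auto
  finally show ?thesis by (simp add: power2_eq_square mult_ac)
qed

section \<open>Unrolling the closed loop\<close>

lemma matrix_vector_mult_sum:
  "(X::'a::real_algebra_1^'n::finite^'m::finite) *v sum f S = (\<Sum>x\<in>S. X *v f x)"
  using linear_sum[OF matrix_vector_mul_linear[of X], of f S] by (simp add: o_def)

lemma sum_matrix_vector_mult:
  "sum f S *v (v::'a::real_algebra_1^'n::finite) = (\<Sum>x\<in>S. (f x::'a^'n^'m::finite) *v v)"
proof (cases "finite S")
  case True
  thus ?thesis by (induction rule: finite_induct) (auto simp: matrix_vector_mult_add_rdistrib)
qed simp

definition dac_sum :: "nat \<Rightarrow> (int \<Rightarrow> nat \<Rightarrow> real^'n::finite^'m::finite) \<Rightarrow> (nat \<Rightarrow> real^'n) \<Rightarrow> int \<Rightarrow> real^'m" where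
  "dac_sum H M w s = (\<Sum>i=1..H. M s (i - 1) *v wz w (s - int i))"

definition closed_loop_dist :: "real^'m::finite^'n::finite \<Rightarrow> nat \<Rightarrow> (int \<Rightarrow> nat \<Rightarrow> real^'n^'m)
    \<Rightarrow> (nat \<Rightarrow> real^'n) \<Rightarrow> int \<Rightarrow> real^'n" where
  "closed_loop_dist B H M w s = wz w s + B *v dac_sum H M w s"

lemma dac_eq_dac_sum: "dac K H M w s x = - (K *v x) + dac_sum H M w s"
  unfolding dac_def dac_sum_def by simp

lemma closed_loop_dist_neg: "s < 0 \<Longrightarrow> closed_loop_dist B H M w s = 0"
  by (simp add: closed_loop_dist_def dac_sum_def wz_def)

lemma xK_Suc_closed_loop:
  "xK A B K H M w (Suc t) = (A - B ** K) *v xK A B K H M w t + closed_loop_dist B H M w (int t)"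
  by (simp add: dac_eq_dac_sum closed_loop_dist_def wz_def algebra_simps
      matrix_vector_mul_assoc[symmetric])

lemma xK_eq_sum:
  "xK A B K H M w t = (\<Sum>j<t. mpow (A - B ** K) j *v closed_loop_dist B H M w (int t - 1 - int j))"
proof (induction t)
  case (Suc t)
  have "xK A B K H M w (Suc t)
      = (\<Sum>j<t. mpow (A - B ** K) (Suc j) *v closed_loop_dist B H M w (int t - 1 - int j))
        + closed_loop_dist B H M w (int t)"
    by (simp only: xK_Suc_closed_loop Suc) (simp add: matrix_vector_mult_sum matrix_vector_mul_assoc)
  also have "\<dots> = (\<Sum>j<Suc t. mpow (A - B ** K) j *v closed_loop_dist B H M w (int (Suc t) - 1 - int j))"
    by (subst sum.lessThan_Suc_shift) (simp add: add.commute diff_diff_eq[symmetric])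
  finally show ?case .
qed simp

lemma ysur_eq_sum:
  "ysur A B K H M w t = (\<Sum>j=0..H. mpow (A - B ** K) j *v closed_loop_dist B H M w (t - 1 - int j))"
proof -
  let ?AK = "A - B ** K"
  let ?wv = "\<lambda>i::nat. wz w (t - 1 - int i)"
  let ?c = "\<lambda>i j::nat. 1 \<le> int i - int j \<and> int i - int j \<le> int H"
  let ?X = "\<lambda>i j::nat. mpow ?AK j ** B ** M (t - 1 - int j) (i - j - 1)"
  have y: "ysur A B K H M w t = (\<Sum>i=0..2*H. (if i \<le> H then mpow ?AK i else 0) *v ?wv i)
      + (\<Sum>i=0..2*H. \<Sum>j=0..H. (if ?c i j then ?X i j *v ?wv i else 0))"
    unfolding ysur_def Psi_def matrix_vector_mult_add_rdistrib sum.distrib sum_matrix_vector_mult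
      if_distrib[of "\<lambda>X. X *v _"] matrix_vector_mult_0 ..
  have free: "(\<Sum>i=0..2*H. (if i \<le> H then mpow ?AK i else 0) *v ?wv i) = (\<Sum>i=0..H. mpow ?AK i *v ?wv i)"
  proof -
    have "(\<Sum>i=0..2*H. (if i \<le> H then mpow ?AK i else 0) *v ?wv i)
        = (\<Sum>i\<in>{i\<in>{0..2*H}. i \<le> H}. mpow ?AK i *v ?wv i)"
      by (subst sum.inter_filter) (auto intro: sum.cong)
    also have "{i\<in>{0..2*H}. i \<le> H} = {0..H}" by auto
    finally show ?thesis .
  qed
  have forced: "(\<Sum>i=0..2*H. (if ?c i j then ?X i j *v ?wv i else 0))
      = mpow ?AK j *v (B *v dac_sum H M w (t - 1 - int j))" if "j \<le> H" for j
  proof -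
    have "(\<Sum>i=0..2*H. (if ?c i j then ?X i j *v ?wv i else 0))
        = (\<Sum>i\<in>{i\<in>{0..2*H}. ?c i j}. ?X i j *v ?wv i)"
      by (rule sum.inter_filter[symmetric]) simp
    also have "{i\<in>{0..2*H}. ?c i j} = {1+j..H+j}" using that by auto
    also have "(\<Sum>i\<in>{1+j..H+j}. ?X i j *v ?wv i) = (\<Sum>k=1..H. ?X (k+j) j *v ?wv (k+j))"
      by (rule sum.shift_bounds_cl_nat_ivl)
    also have "\<dots> = (\<Sum>k=1..H. mpow ?AK j *v (B *v (M (t - 1 - int j) (k - 1) *v wz w (t - 1 - int j - int k))))"
      by (intro sum.cong) (auto simp: matrix_vector_mul_assoc matrix_mul_assoc algebra_simps)
    also have "\<dots> = mpow ?AK j *v (B *v dac_sum H M w (t - 1 - int j))"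
      by (simp add: dac_sum_def matrix_vector_mult_sum)
    finally show ?thesis .
  qed
  have "ysur A B K H M w t = (\<Sum>j=0..H. mpow ?AK j *v ?wv j)
      + (\<Sum>j=0..H. mpow ?AK j *v (B *v dac_sum H M w (t - 1 - int j)))"
    unfolding y free by (subst sum.swap) (simp add: forced)
  also have "\<dots> = (\<Sum>j=0..H. mpow ?AK j *v closed_loop_dist B H M w (t - 1 - int j))"
    by (simp add: closed_loop_dist_def sum.distrib matrix_vector_right_distrib)
  finally show ?thesis .
qed

lemma xK_minus_ysur_eq_tail:
  assumes "t \<le> N"
  shows "xK A B K H M w t - ysur A B K H M w (int t)
     = (\<Sum>j\<in>{Suc H..<N+H+1}. mpow (A - B ** K) j *v closed_loop_dist B H M w (int t - 1 - int j))"
proof -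
  let ?f = "\<lambda>j. mpow (A - B ** K) j *v closed_loop_dist B H M w (int t - 1 - int j)"
  have "xK A B K H M w t = (\<Sum>j<N+H+1. ?f j)"
    unfolding xK_eq_sum using assms
    by (intro sum.mono_neutral_right[symmetric]) (auto simp: closed_loop_dist_neg)
  also have "{..<N+H+1} = {0..H} \<union> {Suc H..<N+H+1}" by auto
  also have "sum ?f \<dots> = sum ?f {0..H} + sum ?f {Suc H..<N+H+1}"
    by (rule sum.union_disjoint) auto
  finally show ?thesis unfolding ysur_eq_sum by simp
qed

section \<open>Norm bounds\<close>

lemma sum_reindex_le_sum_lessThan:
  fixes g :: "int \<Rightarrow> real"
  assumes nonneg: "\<And>s. 0 \<le> g s" and neg: "\<And>s. s < 0 \<Longrightarrow> g s = 0"
    and "finite I" and inj: "inj_on h I" and bound: "\<And>i. i \<in> I \<Longrightarrow> h i < int N"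
  shows "(\<Sum>i\<in>I. g (h i)) \<le> (\<Sum>s<N. g (int s))"
proof -
  have "(\<Sum>i\<in>I. g (h i)) = (\<Sum>r\<in>h ` I. g r)" by (simp add: sum.reindex[OF inj])
  also have "\<dots> = (\<Sum>r\<in>h ` I \<inter> {0..<int N}. g r) + (\<Sum>r\<in>h ` I - {0..<int N}. g r)"
    using \<open>finite I\<close> by (metis Diff_Int_distrib2 Int_Diff finite_imageI inf.idem sum.Int_Diff)
  also have "(\<Sum>r\<in>h ` I - {0..<int N}. g r) = 0"
    using bound by (intro sum.neutral) (force intro: neg)
  also have "(\<Sum>r\<in>h ` I \<inter> {0..<int N}. g r) \<le> (\<Sum>r\<in>{0..<int N}. g r)"
    by (intro sum_mono2) (auto intro: nonneg)
  also have "{0..<int N} = int ` {0..<N}" by (simp add: image_int_atLeastLessThan)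
  also have "(\<Sum>r\<in>int ` {0..<N}. g r) = (\<Sum>s<N. g (int s))"
    by (simp add: sum.reindex atLeast0LessThan)
  finally show ?thesis by simp
qed

lemma sum_geometric_le:
  fixes r :: real
  assumes "0 \<le> r" "r < 1" "finite J"
  shows "(\<Sum>j\<in>J. r^j) \<le> 1 / (1 - r)"
proof -
  obtain n where "J \<subseteq> {..<n}" using assms(3) by (meson finite_nat_iff_bounded)
  hence "(\<Sum>j\<in>J. r^j) \<le> (\<Sum>j<n. r^j)" using assms by (intro sum_mono2) auto
  also have "\<dots> = (1 - r^n) / (1 - r)" using assms by (simp add: sum_gp_strict)
  also have "\<dots> \<le> 1 / (1 - r)" using assms by (intro divide_right_mono) auto
  finally show ?thesis .
qed

lemma sum_geometric_tail_le:
  fixes r :: real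
  assumes "0 \<le> r" "r < 1"
  shows "(\<Sum>j\<in>{n..<N}. r^j) \<le> r^n / (1 - r)"
proof (cases "n \<le> N")
  case True
  have "(\<Sum>j\<in>{n..<N}. r^j) = (\<Sum>j\<in>{0 + n..<(N - n) + n}. r^j)" using True by simp
  also have "\<dots> = r^n * (\<Sum>i\<in>{0..<N - n}. r^i)"
    by (simp only: sum.shift_bounds_nat_ivl) (simp add: sum_distrib_left power_add mult_ac)
  also have "\<dots> \<le> r^n * (1 / (1 - r))"
    using sum_geometric_le[OF assms] assms by (intro mult_left_mono) auto
  finally show ?thesis by simp
qed (use assms in simp)

definition dist_norm_sum :: "(nat \<Rightarrow> 'a::real_normed_vector) \<Rightarrow> nat \<Rightarrow> real" where
  "dist_norm_sum w N = (\<Sum>s<N. norm (w s))"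

lemma dist_norm_sum_nonneg: "0 \<le> dist_norm_sum w N"
  unfolding dist_norm_sum_def by (simp add: sum_nonneg)

lemma norm_wz_le_dist_norm_sum: "s < int N \<Longrightarrow> norm (wz w s) \<le> dist_norm_sum w N"
  unfolding dist_norm_sum_def wz_def using member_le_sum[of "nat s" "{..<N}" "\<lambda>s. norm (w s)"]
  by (auto simp: sum_nonneg)

lemma sum_norm_wz_shift_le: "(\<Sum>s<N. norm (wz w (int s - int i))) \<le> dist_norm_sum w N"
proof -
  have "(\<Sum>s<N. norm (wz w (int s - int i))) \<le> (\<Sum>r<N. norm (wz w (int r)))"
    by (rule sum_reindex_le_sum_lessThan) (auto simp: wz_def inj_on_def)
  thus ?thesis by (simp add: wz_def dist_norm_sum_def)
qed

lemma sum_norm_wz_window_le: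
  "s \<le> int N \<Longrightarrow> (\<Sum>i=1..H. norm (wz w (s - int i))) \<le> dist_norm_sum w N"
  using sum_reindex_le_sum_lessThan[of "\<lambda>s. norm (wz w s)" "{1..H}" "\<lambda>i. s - int i" N]
  by (auto simp: wz_def inj_on_def dist_norm_sum_def)

locale dac_system =
  fixes A :: "real^'n::finite^'n" and B :: "real^'m::finite^'n" and K :: "real^'n^'m"
    and H :: nat and M :: "int \<Rightarrow> nat \<Rightarrow> real^'n^'m" and \<kappa> \<gamma> \<kappa>\<^sub>B :: real
  assumes kappa_ge_1: "1 \<le> \<kappa>" and gamma_pos: "0 < \<gamma>" and gamma_less_1: "\<gamma> < 1"
    and kappaB_ge_1: "1 \<le> \<kappa>\<^sub>B" and mnorm_B: "mnorm B \<le> \<kappa>\<^sub>B" and mnorm_K: "mnorm K \<le> \<kappa>"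
    and mnorm_M: "\<And>s i. i < H \<Longrightarrow> mnorm (M s i) \<le> 2 * \<kappa>\<^sub>B * \<kappa>^3"
    and mnorm_mpow: "\<And>k. mnorm (mpow (A - B ** K) k) \<le> \<kappa>^2 * (1 - \<gamma>)^k"
begin

abbreviation "AK \<equiv> A - B ** K"

lemma norm_mpow_mult_le: "norm (mpow AK j *v v) \<le> \<kappa>^2 * (1 - \<gamma>)^j * norm v"
  using norm_matrix_vector_mult_le[of "mpow AK j" v] mnorm_mpow[of j]
  by (meson mult_right_mono norm_ge_zero order_trans)

lemma norm_K_mult_le: "norm (K *v v) \<le> \<kappa> * norm v"
  using norm_matrix_vector_mult_le[of K v] mnorm_K by (meson mult_right_mono norm_ge_zero order_trans)

lemma norm_dac_sum_le_window:
  "norm (dac_sum H M w s) \<le> 2 * \<kappa>\<^sub>B * \<kappa>^3 * (\<Sum>i=1..H. norm (wz w (s - int i)))"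
proof -
  have "norm (dac_sum H M w s) \<le> (\<Sum>i=1..H. norm (M s (i - 1) *v wz w (s - int i)))"
    unfolding dac_sum_def by (rule norm_sum)
  also have "\<dots> \<le> (\<Sum>i=1..H. 2 * \<kappa>\<^sub>B * \<kappa>^3 * norm (wz w (s - int i)))"
  proof (intro sum_mono)
    fix i assume "i \<in> {1..H}"
    hence "mnorm (M s (i - 1)) \<le> 2 * \<kappa>\<^sub>B * \<kappa>^3" by (intro mnorm_M) auto
    thus "norm (M s (i - 1) *v wz w (s - int i)) \<le> 2 * \<kappa>\<^sub>B * \<kappa>^3 * norm (wz w (s - int i))"
      using norm_matrix_vector_mult_le[of "M s (i - 1)" "wz w (s - int i)"] by (meson mult_right_mono norm_ge_zero order_trans)
  qed
  finally show ?thesis by (simp add: sum_distrib_left)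
qed

lemma norm_dac_sum_le:
  assumes "s \<le> int N"
  shows "norm (dac_sum H M w s) \<le> 2 * \<kappa>\<^sub>B * \<kappa>^3 * dist_norm_sum w N"
proof -
  have "norm (dac_sum H M w s) \<le> 2 * \<kappa>\<^sub>B * \<kappa>^3 * (\<Sum>i=1..H. norm (wz w (s - int i)))"
    by (rule norm_dac_sum_le_window)
  also have "\<dots> \<le> 2 * \<kappa>\<^sub>B * \<kappa>^3 * dist_norm_sum w N"
    using sum_norm_wz_window_le[OF assms] kappa_ge_1 kappaB_ge_1 by (intro mult_left_mono) auto
  finally show ?thesis .
qed

lemma norm_closed_loop_dist_le_window:
  "norm (closed_loop_dist B H M w s)
     \<le> norm (wz w s) + 2 * \<kappa>\<^sub>B^2 * \<kappa>^3 * (\<Sum>i=1..H. norm (wz w (s - int i)))"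
proof -
  have "norm (closed_loop_dist B H M w s) \<le> norm (wz w s) + mnorm B * norm (dac_sum H M w s)"
    unfolding closed_loop_dist_def
    using norm_triangle_ineq[of "wz w s" "B *v dac_sum H M w s"]
      norm_matrix_vector_mult_le[of B "dac_sum H M w s"]
    by linarith
  also have "mnorm B * norm (dac_sum H M w s)
      \<le> \<kappa>\<^sub>B * (2 * \<kappa>\<^sub>B * \<kappa>^3 * (\<Sum>i=1..H. norm (wz w (s - int i))))"
    using mnorm_B kappaB_ge_1 norm_dac_sum_le_window by (intro mult_mono) auto
  finally show ?thesis by (simp add: power2_eq_square mult_ac)
qed

lemma norm_closed_loop_dist_le:
  assumes "s < int N"
  shows "norm (closed_loop_dist B H M w s) \<le> 3 * \<kappa>\<^sub>B^2 * \<kappa>^3 * dist_norm_sum w N"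
proof -
  let ?W = "dist_norm_sum w N"
  have "1 \<le> \<kappa>\<^sub>B^2" "1 \<le> \<kappa>^3" using kappa_ge_1 kappaB_ge_1 by simp_all
  hence one: "1 \<le> \<kappa>\<^sub>B^2 * \<kappa>^3" using mult_mono[of 1 "\<kappa>\<^sub>B^2" 1 "\<kappa>^3"] by simp
  have "norm (closed_loop_dist B H M w s)
      \<le> norm (wz w s) + 2 * \<kappa>\<^sub>B^2 * \<kappa>^3 * (\<Sum>i=1..H. norm (wz w (s - int i)))"
    by (rule norm_closed_loop_dist_le_window)
  also have "\<dots> \<le> ?W + 2 * \<kappa>\<^sub>B^2 * \<kappa>^3 * ?W"
    using norm_wz_le_dist_norm_sum[OF assms] sum_norm_wz_window_le[of s N] assms kappa_ge_1
    by (intro add_mono mult_left_mono) auto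
  also have "\<dots> \<le> 3 * \<kappa>\<^sub>B^2 * \<kappa>^3 * ?W"
    using mult_right_mono[OF one dist_norm_sum_nonneg[of w N]] by linarith
  finally show ?thesis .
qed

lemma norm_convolution_le:
  assumes "finite J" and "\<And>j. j \<in> J \<Longrightarrow> s j < int N"
  shows "norm (\<Sum>j\<in>J. mpow AK j *v closed_loop_dist B H M w (s j))
           \<le> 3 * \<kappa>\<^sub>B^2 * \<kappa>^5 / \<gamma> * dist_norm_sum w N"
proof -
  let ?W = "dist_norm_sum w N"
  have "norm (\<Sum>j\<in>J. mpow AK j *v closed_loop_dist B H M w (s j))
      \<le> (\<Sum>j\<in>J. \<kappa>^2 * (1 - \<gamma>)^j * (3 * \<kappa>\<^sub>B^2 * \<kappa>^3 * ?W))"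
  proof (intro order_trans[OF norm_sum] sum_mono)
    fix j assume "j \<in> J"
    have "norm (mpow AK j *v closed_loop_dist B H M w (s j))
        \<le> \<kappa>^2 * (1 - \<gamma>)^j * norm (closed_loop_dist B H M w (s j))"
      by (rule norm_mpow_mult_le)
    also have "\<dots> \<le> \<kappa>^2 * (1 - \<gamma>)^j * (3 * \<kappa>\<^sub>B^2 * \<kappa>^3 * ?W)"
      using norm_closed_loop_dist_le[OF assms(2)[OF \<open>j \<in> J\<close>]] gamma_less_1
      by (intro mult_left_mono) auto
    finally show "norm (mpow AK j *v closed_loop_dist B H M w (s j))
        \<le> \<kappa>^2 * (1 - \<gamma>)^j * (3 * \<kappa>\<^sub>B^2 * \<kappa>^3 * ?W)" .
  qed
  also have "\<dots> = 3 * \<kappa>\<^sub>B^2 * \<kappa>^5 * ?W * (\<Sum>j\<in>J. (1 - \<gamma>)^j)"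
    by (simp add: sum_distrib_left eval_nat_numeral mult_ac)
  also have "\<dots> \<le> 3 * \<kappa>\<^sub>B^2 * \<kappa>^5 * ?W * (1 / \<gamma>)"
    using sum_geometric_le[of "1 - \<gamma>" J] assms(1) gamma_pos gamma_less_1 kappa_ge_1 dist_norm_sum_nonneg
    by (intro mult_left_mono mult_nonneg_nonneg) auto
  finally show ?thesis by simp
qed

lemma norm_xK_le: "t \<le> N \<Longrightarrow> norm (xK A B K H M w t) \<le> 3 * \<kappa>\<^sub>B^2 * \<kappa>^5 / \<gamma> * dist_norm_sum w N"
  unfolding xK_eq_sum by (intro norm_convolution_le) auto

lemma norm_ysur_le: "t \<le> N \<Longrightarrow> norm (ysur A B K H M w (int t)) \<le> 3 * \<kappa>\<^sub>B^2 * \<kappa>^5 / \<gamma> * dist_norm_sum w N"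
  unfolding ysur_eq_sum by (intro norm_convolution_le) auto

lemma norm_dac_le:
  "s \<le> int N \<Longrightarrow> norm (dac K H M w s x) \<le> \<kappa> * norm x + 2 * \<kappa>\<^sub>B * \<kappa>^3 * dist_norm_sum w N"
  unfolding dac_eq_dac_sum
  using norm_triangle_ineq[of "- (K *v x)" "dac_sum H M w s"] norm_K_mult_le[of x]
    norm_dac_sum_le[of s N w]
  by simp

lemma norm_state_input_le:
  assumes "norm x \<le> 3 * \<kappa>\<^sub>B^2 * \<kappa>^5 / \<gamma> * W" and "norm u \<le> \<kappa> * norm x + 2 * \<kappa>\<^sub>B * \<kappa>^3 * W"
    and "0 \<le> W"
  shows "norm (x, u) \<le> 8 * \<kappa>\<^sub>B^2 * \<kappa>^6 / \<gamma> * W"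
proof -
  define Z where "Z = \<kappa>\<^sub>B^2 * \<kappa>^6 / \<gamma> * W"
  have "\<kappa>\<^sub>B^2 * \<kappa>^5 / \<gamma> * W \<le> Z"
    unfolding Z_def using kappa_ge_1 gamma_pos \<open>0 \<le> W\<close>
    by (intro mult_right_mono divide_right_mono mult_left_mono power_increasing) auto
  hence x: "norm x \<le> 3 * Z" using assms(1) by simp
  have "\<kappa> * norm x \<le> \<kappa> * (3 * \<kappa>\<^sub>B^2 * \<kappa>^5 / \<gamma> * W)"
    using assms(1) kappa_ge_1 by (intro mult_left_mono) auto
  also have "\<dots> = 3 * Z" unfolding Z_def by (simp add: eval_nat_numeral field_simps)
  finally have kx: "\<kappa> * norm x \<le> 3 * Z" .
  have "\<kappa>\<^sub>B * \<kappa>^3 \<le> \<kappa>\<^sub>B^2 * \<kappa>^6 / \<gamma>"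
  proof -
    have "\<kappa>\<^sub>B * \<kappa>^3 \<le> \<kappa>\<^sub>B^2 * \<kappa>^6"
      using kappaB_ge_1 kappa_ge_1
      by (intro mult_mono power_increasing) (auto simp: power2_eq_square)
    also have "\<dots> \<le> \<kappa>\<^sub>B^2 * \<kappa>^6 / \<gamma>"
      using mult_left_le[of \<gamma> "\<kappa>\<^sub>B^2 * \<kappa>^6"] gamma_pos gamma_less_1 kappa_ge_1
      by (simp add: le_divide_eq)
    finally show ?thesis .
  qed
  hence "\<kappa>\<^sub>B * \<kappa>^3 * W \<le> Z" unfolding Z_def using \<open>0 \<le> W\<close> by (rule mult_right_mono)
  hence "norm x + norm u \<le> 8 * Z" using x kx assms(2) by linarith
  thus ?thesis using norm_Pair_le[of x u] unfolding Z_def by linarith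
qed

end

lemma dac_system_of_strongly_stable:
  assumes "strongly_stable A B K \<kappa> \<gamma>" and "\<And>t. M t \<in> Mset B \<kappa> \<gamma> H"
  shows "dac_system A B K H M \<kappa> \<gamma> (kappaB B)"
proof
  show "1 \<le> \<kappa>" "0 < \<gamma>" "\<gamma> < 1" "mnorm K \<le> \<kappa>"
    using assms(1) unfolding strongly_stable_def by auto
  show "1 \<le> kappaB B" "mnorm B \<le> kappaB B" unfolding kappaB_def by auto
  show "mnorm (mpow (A - B ** K) k) \<le> \<kappa>^2 * (1 - \<gamma>)^k" for k
    using assms(1) by (rule strongly_stable_mnorm_mpow_le)
  show "mnorm (M s i) \<le> 2 * kappaB B * \<kappa>^3" if "i < H" for s i
  proof -
    have "mnorm (M s i) \<le> 2 * kappaB B * \<kappa>^3 * (1 - \<gamma>)^i"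
      using assms(2)[of s] that unfolding Mset_def by auto
    also have "\<dots> \<le> 2 * kappaB B * \<kappa>^3"
      using \<open>0 < \<gamma>\<close> \<open>\<gamma> < 1\<close> \<open>1 \<le> \<kappa>\<close> \<open>1 \<le> kappaB B\<close>
      by (intro mult_left_le power_le_one) auto
    finally show ?thesis .
  qed
qed

section \<open>Lipschitz continuity of the costs\<close>

lemma A1_nonneg: "A1 c G \<Longrightarrow> 0 \<le> G"
  unfolding A1_def by simp

lemma A1_has_derivative:
  assumes "A1 c G"
  shows "\<exists>D. ((\<lambda>p. c t (fst p) (snd p)) has_derivative (\<lambda>h. inner h D)) (at z) \<and> norm D \<le> G * norm z"
proof -
  obtain gx gu where g: "GDERIV (\<lambda>p. c t (fst p) (snd p)) (fst z, snd z) :> (gx, gu)"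
      "norm gx \<le> G * norm (fst z)" "norm gu \<le> G * norm (snd z)"
    using assms unfolding A1_def by blast
  have "norm (gx, gu) = sqrt ((norm gx)^2 + (norm gu)^2)" by (simp add: norm_Pair)
  also have "\<dots> \<le> sqrt ((G * norm (fst z))^2 + (G * norm (snd z))^2)"
    using g by (intro real_sqrt_le_mono add_mono power_mono) auto
  also have "\<dots> = G * norm z"
    using A1_nonneg[OF assms]
    by (cases z) (simp add: norm_Pair power_mult_distrib real_sqrt_mult flip: distrib_left)
  finally show ?thesis using g(1) unfolding gderiv_def by auto
qed

lemma A1_continuous_on:
  assumes "A1 c G"
  shows "continuous_on UNIV (\<lambda>p. c t (fst p) (snd p))"
proof -
  have "isCont (\<lambda>p. c t (fst p) (snd p)) z" for z
    using A1_has_derivative[OF assms] has_derivative_continuous by blast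
  thus ?thesis by (simp add: continuous_on_eq_continuous_at)
qed

text \<open>Mean value theorem on the segment from \<open>q\<close> to \<open>p\<close>, which stays in the ball, where the
  gradient has norm at most \<open>G R\<close>.\<close>

lemma A1_lipschitz_on_ball:
  fixes p q :: "(real^'n::finite) \<times> (real^'m::finite)"
  assumes "A1 c G" "norm p \<le> R" "norm q \<le> R"
  shows "\<bar>c t (fst p) (snd p) - c t (fst q) (snd q)\<bar> \<le> G * R * norm (p - q)"
proof -
  let ?f = "\<lambda>z::(real^'n) \<times> (real^'m). c t (fst z) (snd z)"
  have "\<forall>z. \<exists>D. (?f has_derivative (\<lambda>h. inner h D)) (at z) \<and> norm D \<le> G * norm z"
    using A1_has_derivative[OF assms(1)] by blast
  from choice[OF this] obtain D
    where "\<forall>z. (?f has_derivative (\<lambda>h. inner h (D z))) (at z) \<and> norm (D z) \<le> G * norm z"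
    by blast
  hence D: "\<And>z. (?f has_derivative (\<lambda>h. inner h (D z))) (at z)" "\<And>z. norm (D z) \<le> G * norm z"
    by auto
  have ball: "closed_segment q p \<subseteq> cball 0 R"
    using assms(2,3) by (intro closed_segment_subset convex_cball) auto
  have "norm (?f p - ?f q) \<le> G * R * norm (p - q)"
  proof (rule differentiable_bound[where S="closed_segment q p" and f' = "\<lambda>z h. inner h (D z)"])
    fix z assume z: "z \<in> closed_segment q p"
    show "(?f has_derivative (\<lambda>h. inner h (D z))) (at z within closed_segment q p)"
      by (rule has_derivative_at_withinI[OF D(1)])
    have "onorm (\<lambda>h. inner h (D z)) \<le> norm (D z)"
    proof (rule onorm_bound)
      fix h
      show "norm (inner h (D z)) \<le> norm (D z) * norm h"
        using Cauchy_Schwarz_ineq2[of h "D z"] by (simp add: mult.commute)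
    qed simp
    also have "\<dots> \<le> G * norm z" by (rule D(2))
    also have "\<dots> \<le> G * R"
      using z ball A1_nonneg[OF assms(1)] by (intro mult_left_mono) auto
    finally show "onorm (\<lambda>h. inner h (D z)) \<le> G * R" .
  qed (auto intro: convex_closed_segment)
  thus ?thesis by simp
qed

definition surrogate_gap :: "(nat \<Rightarrow> real^'n::finite \<Rightarrow> real^'m::finite \<Rightarrow> real) \<Rightarrow> real^'n^'n
    \<Rightarrow> real^'m^'n \<Rightarrow> real^'n^'m \<Rightarrow> nat \<Rightarrow> (int \<Rightarrow> nat \<Rightarrow> real^'n^'m) \<Rightarrow> (nat \<Rightarrow> real^'n) \<Rightarrow> nat \<Rightarrow> real"
  where "surrogate_gap c A B K H M w N =
    (\<Sum>t<N. \<bar>Fsur c A B K H M w t - c t (xK A B K H M w t) (uK A B K H M w t)\<bar>)"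

context dac_system
begin

lemma cost_gap_le_state_gap:
  assumes "A1 c G" and "t < N"
  shows "\<bar>Fsur c A B K H M w t - c t (xK A B K H M w t) (uK A B K H M w t)\<bar>
    \<le> G * (8 * \<kappa>\<^sub>B^2 * \<kappa>^6 / \<gamma> * dist_norm_sum w N) * (2 * \<kappa>)
        * norm (xK A B K H M w t - ysur A B K H M w (int t))"
proof -
  let ?x = "xK A B K H M w t" and ?u = "uK A B K H M w t"
  let ?y = "ysur A B K H M w (int t)" and ?v = "vsur A B K H M w (int t)"
  define R where "R = 8 * \<kappa>\<^sub>B^2 * \<kappa>^6 / \<gamma> * dist_norm_sum w N"
  have "t \<le> N" "int t \<le> int N" using \<open>t < N\<close> by auto
  have yv: "norm (?y, ?v) \<le> R" unfolding R_def
    by (rule norm_state_input_le[OF norm_ysur_le[OF \<open>t \<le> N\<close>]])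
       (auto simp: vsur_def intro: norm_dac_le[OF \<open>int t \<le> int N\<close>] dist_norm_sum_nonneg)
  have xu: "norm (?x, ?u) \<le> R" unfolding R_def
    by (rule norm_state_input_le[OF norm_xK_le[OF \<open>t \<le> N\<close>]])
       (auto simp: uK_def intro: norm_dac_le[OF \<open>int t \<le> int N\<close>] dist_norm_sum_nonneg)
  have GR: "0 \<le> G * R"
    unfolding R_def using A1_nonneg[OF assms(1)] gamma_pos dist_norm_sum_nonneg
    by (intro mult_nonneg_nonneg divide_nonneg_nonneg) auto
  have "?v - ?u = K *v (?x - ?y)"
    by (simp add: vsur_def uK_def dac_eq_dac_sum matrix_vector_mult_diff_distrib)
  hence "norm ((?y, ?v) - (?x, ?u)) \<le> norm (?x - ?y) + \<kappa> * norm (?x - ?y)"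
    using norm_Pair_le[of "?y - ?x" "?v - ?u"] norm_K_mult_le[of "?x - ?y"]
    by (simp add: norm_minus_commute)
  also have "\<dots> \<le> 2 * \<kappa> * norm (?x - ?y)"
    using kappa_ge_1 mult_right_mono[OF kappa_ge_1 norm_ge_zero[of "?x - ?y"]] by simp
  finally have "G * R * norm ((?y, ?v) - (?x, ?u)) \<le> G * R * (2 * \<kappa> * norm (?x - ?y))"
    using GR by (rule mult_left_mono)
  with A1_lipschitz_on_ball[OF assms(1) yv xu, of t] show ?thesis
    unfolding R_def Fsur_def by (simp add: mult_ac)
qed

lemma sum_norm_closed_loop_dist_le:
  "(\<Sum>s<N. norm (closed_loop_dist B H M w (int s))) \<le> (1 + 2 * \<kappa>\<^sub>B^2 * \<kappa>^3 * H) * dist_norm_sum w N"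
proof -
  let ?W = "dist_norm_sum w N"
  have "(\<Sum>s<N. norm (closed_loop_dist B H M w (int s)))
      \<le> (\<Sum>s<N. norm (w s) + 2 * \<kappa>\<^sub>B^2 * \<kappa>^3 * (\<Sum>i=1..H. norm (wz w (int s - int i))))"
    by (intro sum_mono order_trans[OF norm_closed_loop_dist_le_window]) (simp add: wz_def)
  also have "\<dots> = ?W + 2 * \<kappa>\<^sub>B^2 * \<kappa>^3 * (\<Sum>s<N. \<Sum>i=1..H. norm (wz w (int s - int i)))"
    by (simp add: dist_norm_sum_def sum.distrib sum_distrib_left)
  also have "\<dots> = ?W + 2 * \<kappa>\<^sub>B^2 * \<kappa>^3 * (\<Sum>i=1..H. \<Sum>s<N. norm (wz w (int s - int i)))"
    by (subst sum.swap) (rule refl)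
  also have "\<dots> \<le> ?W + 2 * \<kappa>\<^sub>B^2 * \<kappa>^3 * (\<Sum>i=1..H. ?W)"
    using sum_norm_wz_shift_le kappa_ge_1 by (intro add_left_mono mult_left_mono sum_mono) auto
  finally show ?thesis by (simp add: algebra_simps)
qed

lemma sum_norm_xK_minus_ysur_le:
  "(\<Sum>t<N. norm (xK A B K H M w t - ysur A B K H M w (int t)))
     \<le> \<kappa>^2 * ((1 - \<gamma>)^(Suc H) / \<gamma>) * (\<Sum>s<N. norm (closed_loop_dist B H M w (int s)))"
proof -
  let ?J = "{Suc H..<N+H+1}"
  let ?e = "\<lambda>s. norm (closed_loop_dist B H M w s)"
  let ?E = "\<Sum>s<N. ?e (int s)"
  have "(\<Sum>t<N. norm (xK A B K H M w t - ysur A B K H M w (int t)))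
      \<le> (\<Sum>t<N. \<Sum>j\<in>?J. \<kappa>^2 * (1 - \<gamma>)^j * ?e (int t - 1 - int j))"
  proof (rule sum_mono)
    fix t assume "t \<in> {..<N}"
    hence "t \<le> N" by simp
    hence "norm (xK A B K H M w t - ysur A B K H M w (int t))
        = norm (\<Sum>j\<in>?J. mpow AK j *v closed_loop_dist B H M w (int t - 1 - int j))"
      by (simp only: xK_minus_ysur_eq_tail)
    also have "\<dots> \<le> (\<Sum>j\<in>?J. norm (mpow AK j *v closed_loop_dist B H M w (int t - 1 - int j)))"
      by (rule norm_sum)
    also have "\<dots> \<le> (\<Sum>j\<in>?J. \<kappa>^2 * (1 - \<gamma>)^j * ?e (int t - 1 - int j))"
      by (intro sum_mono norm_mpow_mult_le)
    finally show "norm (xK A B K H M w t - ysur A B K H M w (int t))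
        \<le> (\<Sum>j\<in>?J. \<kappa>^2 * (1 - \<gamma>)^j * ?e (int t - 1 - int j))" .
  qed
  also have "\<dots> = (\<Sum>j\<in>?J. \<kappa>^2 * (1 - \<gamma>)^j * (\<Sum>t<N. ?e (int t - 1 - int j)))"
    by (subst sum.swap) (simp add: sum_distrib_left)
  also have "\<dots> \<le> (\<Sum>j\<in>?J. \<kappa>^2 * (1 - \<gamma>)^j * ?E)"
  proof (rule sum_mono)
    fix j
    have "(\<Sum>t<N. ?e (int t - 1 - int j)) \<le> ?E"
      by (rule sum_reindex_le_sum_lessThan) (auto simp: closed_loop_dist_neg inj_on_def)
    thus "\<kappa>^2 * (1 - \<gamma>)^j * (\<Sum>t<N. ?e (int t - 1 - int j)) \<le> \<kappa>^2 * (1 - \<gamma>)^j * ?E"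
      using gamma_less_1 by (intro mult_left_mono) auto
  qed
  also have "\<dots> = \<kappa>^2 * ?E * (\<Sum>j\<in>?J. (1 - \<gamma>)^j)"
    unfolding sum_distrib_left[where A="?J"] by (rule sum.cong) (auto simp: mult_ac)
  also have "\<dots> \<le> \<kappa>^2 * ?E * ((1 - \<gamma>)^(Suc H) / \<gamma>)"
    using sum_geometric_tail_le[of "1 - \<gamma>" "Suc H" "N + H + 1"] gamma_pos gamma_less_1
    by (intro mult_left_mono mult_nonneg_nonneg sum_nonneg) auto
  finally show ?thesis by (simp add: mult_ac)
qed

lemma surrogate_gap_le:
  assumes "A1 c G"
  shows "surrogate_gap c A B K H M w N
    \<le> G * (8 * \<kappa>\<^sub>B^2 * \<kappa>^6 / \<gamma> * dist_norm_sum w N) * (2 * \<kappa>) * (\<kappa>^2 * ((1 - \<gamma>)^(Suc H) / \<gamma>))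
       * ((1 + 2 * \<kappa>\<^sub>B^2 * \<kappa>^3 * H) * dist_norm_sum w N)"
proof -
  define L where "L = G * (8 * \<kappa>\<^sub>B^2 * \<kappa>^6 / \<gamma> * dist_norm_sum w N) * (2 * \<kappa>)"
  have "0 \<le> L"
    unfolding L_def using A1_nonneg[OF assms] gamma_pos kappa_ge_1 dist_norm_sum_nonneg
    by (intro mult_nonneg_nonneg divide_nonneg_nonneg) auto
  have "surrogate_gap c A B K H M w N \<le> (\<Sum>t<N. L * norm (xK A B K H M w t - ysur A B K H M w (int t)))"
    unfolding surrogate_gap_def L_def using cost_gap_le_state_gap[OF assms] by (intro sum_mono) auto
  also have "\<dots> = L * (\<Sum>t<N. norm (xK A B K H M w t - ysur A B K H M w (int t)))"
    by (simp add: sum_distrib_left)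
  also have "\<dots> \<le> L * (\<kappa>^2 * ((1 - \<gamma>)^(Suc H) / \<gamma>) * ((1 + 2 * \<kappa>\<^sub>B^2 * \<kappa>^3 * H) * dist_norm_sum w N))"
  proof (intro mult_left_mono[OF _ \<open>0 \<le> L\<close>])
    have "0 \<le> \<kappa>^2 * ((1 - \<gamma>)^(Suc H) / \<gamma>)" using gamma_pos gamma_less_1 by simp
    thus "(\<Sum>t<N. norm (xK A B K H M w t - ysur A B K H M w (int t)))
        \<le> \<kappa>^2 * ((1 - \<gamma>)^(Suc H) / \<gamma>) * ((1 + 2 * \<kappa>\<^sub>B^2 * \<kappa>^3 * H) * dist_norm_sum w N)"
      using sum_norm_xK_minus_ysur_le[where N=N and w=w] sum_norm_closed_loop_dist_le[where N=N and w=w]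
      by (meson mult_left_mono order_trans)
  qed
  finally show ?thesis unfolding L_def by (simp add: mult_ac)
qed

end

section \<open>The truncation horizon\<close>

lemma one_le_ln_of_ge_3: "3 \<le> T \<Longrightarrow> 1 \<le> ln (real T)"
proof -
  assume "3 \<le> T"
  have "(1::real) = ln (exp 1)" by simp
  also have "\<dots> \<le> ln 3" using exp_le by (subst ln_le_cancel_iff) auto
  also have "\<dots> \<le> ln (real T)" using \<open>3 \<le> T\<close> by (subst ln_le_cancel_iff) auto
  finally show ?thesis .
qed

text \<open>\<open>(1 - \<gamma>)\<^sup>H \<le> e\<^sup>-\<^sup>\<gamma>\<^sup>H\<close>, and \<open>\<gamma> H \<ge> 2 ln x\<close>.\<close>

lemma power_one_minus_le_inverse_square:
  fixes \<gamma> x :: real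
  assumes "0 < \<gamma>" "\<gamma> < 1" "0 < x" and H: "2 / \<gamma> * ln x \<le> real H"
  shows "(1 - \<gamma>)^H \<le> 1 / x^2"
proof -
  have "real H * ln (1 - \<gamma>) \<le> real H * (- \<gamma>)"
    using ln_le_minus_one[of "1 - \<gamma>"] assms(1,2) by (intro mult_left_mono) auto
  also have "\<dots> \<le> (2 / \<gamma> * ln x) * (- \<gamma>)"
    using H assms(1) by (intro mult_right_mono_neg) auto
  also have "\<dots> = ln (1 / x^2)"
    using assms(1,3) by (simp add: ln_div ln_realpow)
  finally have "real H * ln (1 - \<gamma>) \<le> ln (1 / x^2)" .
  hence "exp (real H * ln (1 - \<gamma>)) \<le> 1 / x^2"
    using assms(3) by (metis exp_le_cancel_iff exp_ln divide_pos_pos zero_less_one zero_less_power)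
  thus ?thesis using assms(1,2) by (simp add: exp_of_nat_mult)
qed

lemma horizon_succ_le:
  fixes \<gamma> L :: real
  assumes "0 < \<gamma>" "\<gamma> < 1" "1 \<le> L" "H = nat \<lceil>2 / \<gamma> * L\<rceil>"
  shows "real H + 1 \<le> 4 * L / \<gamma>"
proof -
  have "real H = real_of_int \<lceil>2 / \<gamma> * L\<rceil>" using assms by simp
  also have "\<dots> \<le> 2 / \<gamma> * L + 1" by (rule of_int_ceiling_le_add_one)
  finally have "real H \<le> 2 / \<gamma> * L + 1" .
  moreover have "1 \<le> L / \<gamma>" using assms by (simp add: le_divide_eq)
  ultimately show ?thesis by simp
qed

lemma confidence_radius_bound:
  fixes G C \<gamma> \<kappa> \<kappa>\<^sub>B L x :: real
  assumes "0 \<le> G" "0 < C" "0 < \<gamma>" "\<gamma> < 1" "1 \<le> \<kappa>" "1 \<le> \<kappa>\<^sub>B" "1 \<le> L" "0 < x"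
  shows "G * (128 * \<kappa>\<^sub>B^4 * \<kappa>^12 * L / (\<gamma>^3 * x^2)) * (C * x * \<gamma>^2 * (1 - \<gamma>) / (46 * \<kappa>\<^sub>B^2 * \<kappa>^8))^2
    \<le> 2 * G * C^2 * L^2"
proof -
  have "\<gamma> * (1 - \<gamma>)^2 \<le> 1" using assms by (intro mult_le_one power_le_one) auto
  also have "\<dots> \<le> \<kappa>^4" using assms by simp
  finally have "\<gamma> * (1 - \<gamma>)^2 / \<kappa>^4 \<le> 1" using assms by (simp add: divide_le_eq)
  moreover have "0 \<le> \<gamma> * (1 - \<gamma>)^2 / \<kappa>^4" using assms by simp
  ultimately have small: "128 / 2116 * (\<gamma> * (1 - \<gamma>)^2 / \<kappa>^4) \<le> 1" by linarith
  have "G * (128 * \<kappa>\<^sub>B^4 * \<kappa>^12 * L / (\<gamma>^3 * x^2)) * (C * x * \<gamma>^2 * (1 - \<gamma>) / (46 * \<kappa>\<^sub>B^2 * \<kappa>^8))^2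
      = (G * C^2 * L) * (128 / 2116 * (\<gamma> * (1 - \<gamma>)^2 / \<kappa>^4))"
    using assms by (simp add: field_simps power2_eq_square power_mult_distrib eval_nat_numeral)
  also have "\<dots> \<le> G * C^2 * L"
    using small assms by (intro mult_left_le) auto
  also have "\<dots> \<le> G * C^2 * (2 * L^2)"
  proof (rule mult_left_mono)
    have "L * 1 \<le> L * L" using assms(7) by (intro mult_left_mono) auto
    thus "L \<le> 2 * L^2" using assms(7) by (simp add: power2_eq_square)
  qed (use assms in simp)
  finally show ?thesis by simp
qed

context dac_system
begin

lemma surrogate_gap_le_horizon:
  assumes "A1 c G" and "3 \<le> T" and H: "H = nat \<lceil>2 / \<gamma> * ln (real T)\<rceil>"
  shows "surrogate_gap c A B K H M w T
    \<le> G * (128 * \<kappa>\<^sub>B^4 * \<kappa>^12 * ln (real T) / (\<gamma>^3 * (real T)^2)) * (dist_norm_sum w T)^2"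
proof -
  let ?L = "ln (real T)" and ?W = "dist_norm_sum w T"
  have L: "1 \<le> ?L" using \<open>3 \<le> T\<close> by (rule one_le_ln_of_ge_3)
  have decay: "(1 - \<gamma>)^(Suc H) \<le> 1 / (real T)^2"
  proof -
    have "(1 - \<gamma>)^(Suc H) \<le> (1 - \<gamma>)^H"
      using gamma_pos gamma_less_1 by (intro power_decreasing) auto
    also have "\<dots> \<le> 1 / (real T)^2"
      using gamma_pos gamma_less_1 \<open>3 \<le> T\<close> unfolding H
      by (intro power_one_minus_le_inverse_square real_nat_ceiling_ge) auto
    finally show ?thesis .
  qed
  have window: "1 + 2 * \<kappa>\<^sub>B^2 * \<kappa>^3 * real H \<le> 8 * \<kappa>\<^sub>B^2 * \<kappa>^3 * ?L / \<gamma>"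
  proof -
    have "1 \<le> \<kappa>\<^sub>B^2" "1 \<le> \<kappa>^3" using kappa_ge_1 kappaB_ge_1 by simp_all
    hence k: "1 \<le> \<kappa>\<^sub>B^2 * \<kappa>^3" using mult_mono[of 1 "\<kappa>\<^sub>B^2" 1 "\<kappa>^3"] by simp
    have "1 + 2 * \<kappa>\<^sub>B^2 * \<kappa>^3 * real H \<le> 2 * \<kappa>\<^sub>B^2 * \<kappa>^3 * (real H + 1)"
      using k by (simp add: algebra_simps)
    also have "\<dots> \<le> 2 * \<kappa>\<^sub>B^2 * \<kappa>^3 * (4 * ?L / \<gamma>)"
      using k by (intro mult_left_mono[OF horizon_succ_le[OF gamma_pos gamma_less_1 L H]]) linarith
    finally show ?thesis by simp
  qed
  define P where "P = 16 * G * \<kappa>\<^sub>B^2 * \<kappa>^9 * ?W^2 / \<gamma>^2"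
  have "0 \<le> P"
    unfolding P_def using A1_nonneg[OF assms(1)] kappa_ge_1 by simp
  have "surrogate_gap c A B K H M w T
      \<le> G * (8 * \<kappa>\<^sub>B^2 * \<kappa>^6 / \<gamma> * ?W) * (2 * \<kappa>) * (\<kappa>^2 * ((1 - \<gamma>)^(Suc H) / \<gamma>))
         * ((1 + 2 * \<kappa>\<^sub>B^2 * \<kappa>^3 * H) * ?W)"
    by (rule surrogate_gap_le[OF assms(1)])
  also have "\<dots> = P * ((1 - \<gamma>)^(Suc H) * (1 + 2 * \<kappa>\<^sub>B^2 * \<kappa>^3 * H))"
    unfolding P_def by (simp add: field_simps power2_eq_square eval_nat_numeral)
  also have "\<dots> \<le> P * (1 / (real T)^2 * (8 * \<kappa>\<^sub>B^2 * \<kappa>^3 * ?L / \<gamma>))"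
    using decay window gamma_less_1 kappa_ge_1
    by (intro mult_left_mono[OF mult_mono \<open>0 \<le> P\<close>]) auto
  also have "\<dots> = G * (128 * \<kappa>\<^sub>B^4 * \<kappa>^12 * ?L / (\<gamma>^3 * (real T)^2)) * ?W^2"
    unfolding P_def by (simp add: field_simps power2_eq_square eval_nat_numeral)
  finally show ?thesis .
qed

lemma surrogate_gap_le_of_dist_norm_sum_le:
  assumes "A1 c G" and "3 \<le> T" and "H = nat \<lceil>2 / \<gamma> * ln (real T)\<rceil>" and "0 < C"
    and small: "dist_norm_sum w T \<le> C * T * \<gamma>^2 * (1 - \<gamma>) / (46 * \<kappa>\<^sub>B^2 * \<kappa>^8)"
  shows "surrogate_gap c A B K H M w T \<le> 2 * G * C^2 * (ln (real T))^2"
proof -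
  let ?Y = "128 * \<kappa>\<^sub>B^4 * \<kappa>^12 * ln (real T) / (\<gamma>^3 * (real T)^2)"
  have "0 \<le> G * ?Y"
    using A1_nonneg[OF assms(1)] gamma_pos one_le_ln_of_ge_3[OF \<open>3 \<le> T\<close>]
    by (intro mult_nonneg_nonneg divide_nonneg_nonneg) auto
  hence "G * ?Y * (dist_norm_sum w T)^2 \<le> G * ?Y * (C * T * \<gamma>^2 * (1 - \<gamma>) / (46 * \<kappa>\<^sub>B^2 * \<kappa>^8))^2"
    by (intro mult_left_mono power_mono small dist_norm_sum_nonneg)
  with surrogate_gap_le_horizon[OF assms(1-3), of w]
  have "surrogate_gap c A B K H M w T \<le> G * ?Y * (C * T * \<gamma>^2 * (1 - \<gamma>) / (46 * \<kappa>\<^sub>B^2 * \<kappa>^8))^2"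
    by linarith
  also have "\<dots> \<le> 2 * G * C^2 * (ln (real T))^2"
    using A1_nonneg[OF assms(1)] \<open>0 < C\<close> gamma_pos gamma_less_1 kappa_ge_1 kappaB_ge_1
      one_le_ln_of_ge_3[OF \<open>3 \<le> T\<close>] \<open>3 \<le> T\<close>
    by (intro confidence_radius_bound) auto
  finally show ?thesis .
qed

end

section \<open>Measurability and Markov's inequality\<close>

lemma borel_measurable_matrix_vector_mult[measurable (raw)]:
  fixes X :: "real^'n::finite^'m::finite"
  assumes "f \<in> borel_measurable N"
  shows "(\<lambda>\<omega>. X *v f \<omega>) \<in> borel_measurable N"
proof -
  have "continuous_on UNIV (\<lambda>v. X *v v)"
    by (rule linear_continuous_on[OF bounded_linear_matrix_vector_mult])
  thus ?thesis using borel_measurable_continuous_on[OF _ assms] by blast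
qed

context
  fixes N :: "'a measure" and w :: "nat \<Rightarrow> 'a \<Rightarrow> real^'n::finite"
  assumes w_measurable: "\<And>t. w t \<in> borel_measurable N"
begin

lemma wz_measurable[measurable]: "(\<lambda>\<omega>. wz (\<lambda>s. w s \<omega>) s) \<in> borel_measurable N"
  unfolding wz_def using w_measurable by (cases "s < 0") auto

lemma dac_sum_measurable[measurable]: "(\<lambda>\<omega>. dac_sum H M (\<lambda>s. w s \<omega>) s) \<in> borel_measurable N"
  unfolding dac_sum_def by measurable

lemma dac_measurable[measurable]:
  "f \<in> borel_measurable N \<Longrightarrow> (\<lambda>\<omega>. dac K H M (\<lambda>s. w s \<omega>) s (f \<omega>)) \<in> borel_measurable N"
  unfolding dac_eq_dac_sum
  by (intro borel_measurable_add borel_measurable_uminus borel_measurable_matrix_vector_mult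
      dac_sum_measurable)

lemma xK_measurable[measurable]: "(\<lambda>\<omega>. xK A B K H M (\<lambda>s. w s \<omega>) t) \<in> borel_measurable N"
proof (induction t)
  case (Suc t)
  show ?case unfolding xK.simps using Suc w_measurable by measurable
qed simp

lemma surrogate_gap_measurable:
  assumes "A1 c G"
  shows "(\<lambda>\<omega>. surrogate_gap c A B K H M (\<lambda>s. w s \<omega>) T) \<in> borel_measurable N"
proof -
  have cost: "(\<lambda>\<omega>. c t (f \<omega>) (g \<omega>)) \<in> borel_measurable N"
    if "f \<in> borel_measurable N" "g \<in> borel_measurable N" for t and f :: "'a \<Rightarrow> real^'n" and g
    by (rule borel_measurable_continuous_Pair[OF that A1_continuous_on[OF assms]])
  have [measurable]: "(\<lambda>\<omega>. Fsur c A B K H M (\<lambda>s. w s \<omega>) t) \<in> borel_measurable N" for t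
    unfolding Fsur_def ysur_def vsur_def by (rule cost) measurable
  have [measurable]:
    "(\<lambda>\<omega>. c t (xK A B K H M (\<lambda>s. w s \<omega>) t) (uK A B K H M (\<lambda>s. w s \<omega>) t)) \<in> borel_measurable N" for t
    unfolding uK_def by (rule cost) measurable
  show ?thesis unfolding surrogate_gap_def by measurable
qed

end

lemma prob_dist_norm_sum_le:
  fixes w :: "nat \<Rightarrow> 'a \<Rightarrow> 'b::real_normed_vector"
  assumes "prob_space \<Omega>" and w: "\<And>t. integrable \<Omega> (\<lambda>\<omega>. norm (w t \<omega>)) \<and> (\<integral>\<omega>. norm (w t \<omega>) \<partial>\<Omega>) \<le> \<sigma>"
    and "0 < a"
  shows "1 - real N * \<sigma> / a \<le> measure \<Omega> {\<omega> \<in> space \<Omega>. dist_norm_sum (\<lambda>s. w s \<omega>) N \<le> a}"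
proof -
  interpret prob_space \<Omega> by fact
  define Z where "Z \<omega> = dist_norm_sum (\<lambda>s. w s \<omega>) N" for \<omega>
  have Z_int: "integrable \<Omega> Z" unfolding Z_def dist_norm_sum_def using w by auto
  hence [measurable]: "Z \<in> borel_measurable \<Omega>" by (rule borel_measurable_integrable)
  have "(\<integral>\<omega>. Z \<omega> \<partial>\<Omega>) = (\<Sum>s<N. \<integral>\<omega>. norm (w s \<omega>) \<partial>\<Omega>)"
    unfolding Z_def dist_norm_sum_def by (rule Bochner_Integration.integral_sum) (use w in auto)
  also have "\<dots> \<le> real N * \<sigma>" using w sum_mono[of "{..<N}" _ "\<lambda>_. \<sigma>"] by simp
  finally have EZ: "(\<integral>\<omega>. Z \<omega> \<partial>\<Omega>) \<le> real N * \<sigma>" .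
  have "prob {\<omega> \<in> space \<Omega>. a < Z \<omega>} \<le> prob {\<omega> \<in> space \<Omega>. a \<le> Z \<omega>}"
    by (intro finite_measure_mono) auto
  also have "\<dots> \<le> (\<integral>\<omega>. Z \<omega> \<partial>\<Omega>) / a"
    using \<open>0 < a\<close> by (intro integral_Markov_inequality_measure[OF Z_int])
      (auto simp: Z_def dist_norm_sum_nonneg)
  also have "\<dots> \<le> real N * \<sigma> / a" using \<open>0 < a\<close> by (intro divide_right_mono[OF EZ]) simp
  finally have "prob {\<omega> \<in> space \<Omega>. a < Z \<omega>} \<le> real N * \<sigma> / a" .
  moreover have "prob {\<omega> \<in> space \<Omega>. Z \<omega> \<le> a} = 1 - prob {\<omega> \<in> space \<Omega>. a < Z \<omega>}"
  proof -
    have "{\<omega> \<in> space \<Omega>. Z \<omega> \<le> a} = space \<Omega> - {\<omega> \<in> space \<Omega>. a < Z \<omega>}" by auto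
    thus ?thesis by (simp add: prob_compl)
  qed
  ultimately show ?thesis unfolding Z_def by simp
qed

theorem lemma2:
  fixes \<Omega> :: "'a measure"
    and w :: "nat \<Rightarrow> 'a \<Rightarrow> real^'n::finite"
    and A :: "real^'n^'n" and B :: "real^'m::finite^'n" and K :: "real^'n^'m"
    and c :: "nat \<Rightarrow> real^'n \<Rightarrow> real^'m \<Rightarrow> real"
    and M :: "int \<Rightarrow> nat \<Rightarrow> real^'n^'m"
    and G\<^sub>c \<sigma>\<^sub>w \<kappa> \<gamma> C :: real and T H :: nat
  assumes "prob_space \<Omega>"
    and "\<And>t. w t \<in> borel_measurable \<Omega>"
    and A1: "A1 c G\<^sub>c"
    and A2: "\<And>t. integrable \<Omega> (\<lambda>\<omega>. norm (w t \<omega>)) \<and> (\<integral>\<omega>. norm (w t \<omega>) \<partial>\<Omega>) \<le> \<sigma>\<^sub>w"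
    and "strongly_stable A B K \<kappa> \<gamma>"
    and "T \<ge> 3"
    and "H = nat \<lceil>2 / \<gamma> * ln (real T)\<rceil>"
    and "\<And>t. M t \<in> Mset B \<kappa> \<gamma> H"
    and "C > 0"
  shows "measure \<Omega> {\<omega> \<in> space \<Omega>.
           (\<Sum>t<T. \<bar>Fsur c A B K H M (\<lambda>s. w s \<omega>) t
                   - c t (xK A B K H M (\<lambda>s. w s \<omega>) t) (uK A B K H M (\<lambda>s. w s \<omega>) t)\<bar>)
           \<le> 2 * G\<^sub>c * C^2 * (ln (real T))^2}
         \<ge> 1 - 46 * \<sigma>\<^sub>w * kappaB B ^ 2 * \<kappa>^8 / (C * \<gamma>^2 * (1 - \<gamma>))"
proof -
  interpret prob_space \<Omega> by fact
  interpret dac_system A B K H M \<kappa> \<gamma> "kappaB B"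
    by (rule dac_system_of_strongly_stable) fact+
  define a where "a = C * T * \<gamma>^2 * (1 - \<gamma>) / (46 * kappaB B^2 * \<kappa>^8)"
  have "0 < a" unfolding a_def using \<open>C > 0\<close> \<open>T \<ge> 3\<close> gamma_pos gamma_less_1 kappa_ge_1 kappaB_ge_1
    by (intro divide_pos_pos mult_pos_pos) auto
  let ?good = "{\<omega> \<in> space \<Omega>. surrogate_gap c A B K H M (\<lambda>s. w s \<omega>) T \<le> 2 * G\<^sub>c * C^2 * (ln (real T))^2}"
  have [measurable]: "(\<lambda>\<omega>. surrogate_gap c A B K H M (\<lambda>s. w s \<omega>) T) \<in> borel_measurable \<Omega>"
    by (rule surrogate_gap_measurable[OF assms(2) A1])
  have "{\<omega> \<in> space \<Omega>. dist_norm_sum (\<lambda>s. w s \<omega>) T \<le> a} \<subseteq> ?good"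
    unfolding a_def using surrogate_gap_le_of_dist_norm_sum_le[OF A1 \<open>T \<ge> 3\<close> \<open>H = _\<close> \<open>C > 0\<close>] by auto
  moreover have "?good \<in> events" by measurable
  ultimately have "prob {\<omega> \<in> space \<Omega>. dist_norm_sum (\<lambda>s. w s \<omega>) T \<le> a} \<le> prob ?good"
    by (rule finite_measure_mono)
  moreover have "real T * \<sigma>\<^sub>w / a = 46 * \<sigma>\<^sub>w * kappaB B ^ 2 * \<kappa>^8 / (C * \<gamma>^2 * (1 - \<gamma>))"
    unfolding a_def using \<open>C > 0\<close> \<open>T \<ge> 3\<close> gamma_pos gamma_less_1 kappa_ge_1 by (simp add: field_simps)
  ultimately show ?thesis
    using prob_dist_norm_sum_le[where w=w and N=T, OF \<open>prob_space \<Omega>\<close> A2 \<open>0 < a\<close>]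
    unfolding surrogate_gap_def by simp
qed

end
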